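(* Let $n\in\mathbb{N}$. For each $k\in\mathbb{N}$ let $X_k = \{\alpha\in\mathcal{O}\,|\,N(\alpha) = k\}$, $t_k = |X_k/\mathcal{O}^{\times}|$ and $x_{1,k}, \dots, x_{t_k,k}$ be a set of representatives for $X_k/\mathcal{O}^{\times}$ (under right multiplication by units). For such $k$ define \[R_{k} := \left\{\begin{pmatrix}x_{i,k} & v\\ w & x_{j,k}\end{pmatrix}\,:\,1\leq i,j\leq t_k,\ v,w\in X_{n-k},\ x_{i,k}\overline{w} + v\overline{x_{j,k}} = 0\right\}.\] Then the following matrices are representatives for $(\text{GU}_2(D)_n\cap M_2(\mathcal{O})^{\times})/ \Gamma^{(1)}$ (cosets under right multiplication by $\Gamma^{(1)}$): $\bigcup_{k=m+1}^n R_k$ if $n=2m+1$ is odd, and $\left(\bigcup_{k=m+1}^n R_k\right)\cup R_{m}'$ if $n=2m$ is even. Here $R_m'\subset R_m$ is the finite subset obtained as follows: each matrix $\begin{pmatrix}x_{i,m} & v\\ w & x_{j,m}\end{pmatrix}\in R_m$ is equivalent under right multiplication by an antidiagonal element of $\Gamma^{(1)}$ to at most one other matrix of $R_m$, namely $\begin{pmatrix}x_{s,m} & \frac{x_{i,m}\overline{w}x_{t,m}}{m}\\ \frac{x_{j,m}\overline{v}x_{s,m}}{m} & x_{t,m}\end{pmatrix}$ where $v\sim x_{s,m}$ and $w\sim x_{t,m}$ under right unit multiplication; $R_m'$ consists of one chosen matrix from each such equivalence pair.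
   Context: $D$ is a definite quaternion algebra over $\mathbb{Q}$ ramified exactly at $\{p,\infty\}$ for a prime $p$, with standard involution $x\mapsto\overline{x}$ and reduced norm $N$; $\mathcal{O}$ is a fixed maximal order with (finite) unit group $\mathcal{O}^\times$. $\text{GU}_2(D) = \{g\in M_2(D)\,|\,g\overline{g}^T = \mu(g)I,\ \mu(g)\in\mathbb{Q}^\times\}$, and $\text{GU}_2(D)_n$ denotes its elements of similitude $\mu(g)=n$. $M_2(\mathcal{O})^\times = \text{GL}_2(D)\cap M_2(\mathcal{O})$. $\Gamma^{(1)} = \text{GU}_2(\mathcal{O})$ is the finite group of matrices $\begin{pmatrix}\alpha&0\\0&\beta\end{pmatrix}$ and $\begin{pmatrix}0&\alpha\\ \beta&0\end{pmatrix}$ with $\alpha,\beta\in\mathcal{O}^\times$. In the paper this is applied (for $p\in\{2,3\}$, $n=q$ a prime $\neq p$) to obtain Hecke representatives for the operator $T_{u,q}$. *)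

theory Defs
  imports "HOL-Number_Theory.Number_Theory"
begin

text \<open>Elements x0 + x1 i + x2 j + x3 k with i^2 = a, j^2 = b, k = ij = -ji.
  Every quaternion algebra over Q is isomorphic to some (a,b)_Q with a,b nonzero
  integers, so we fix D in this form.\<close>

datatype quat = Quat (q0: rat) (q1: rat) (q2: rat) (q3: rat)

instantiation quat :: "{zero, plus, uminus, minus}"
begin
definition "0 = Quat 0 0 0 0"
definition "x + y = Quat (q0 x + q0 y) (q1 x + q1 y) (q2 x + q2 y) (q3 x + q3 y)"
definition "- x = Quat (- q0 x) (- q1 x) (- q2 x) (- q3 x)"
definition "x - y = Quat (q0 x - q0 y) (q1 x - q1 y) (q2 x - q2 y) (q3 x - q3 y)"
instance ..
end

definition qone :: quat where "qone = Quat 1 0 0 0"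

definition qsc :: "rat \<Rightarrow> quat \<Rightarrow> quat" where
  "qsc r x = Quat (r * q0 x) (r * q1 x) (r * q2 x) (r * q3 x)"

definition qof_rat :: "rat \<Rightarrow> quat" where "qof_rat r = Quat r 0 0 0"

definition qmul :: "int \<Rightarrow> int \<Rightarrow> quat \<Rightarrow> quat \<Rightarrow> quat" where
  "qmul a b x y = Quat
     (q0 x * q0 y + of_int a * q1 x * q1 y + of_int b * q2 x * q2 y - of_int (a*b) * q3 x * q3 y)
     (q0 x * q1 y + q1 x * q0 y - of_int b * q2 x * q3 y + of_int b * q3 x * q2 y)
     (q0 x * q2 y + q2 x * q0 y + of_int a * q1 x * q3 y - of_int a * q3 x * q1 y)
     (q0 x * q3 y + q3 x * q0 y + q1 x * q2 y - q2 x * q1 y)"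

definition qconj :: "quat \<Rightarrow> quat" where
  "qconj x = Quat (q0 x) (- q1 x) (- q2 x) (- q3 x)"

definition qnorm :: "int \<Rightarrow> int \<Rightarrow> quat \<Rightarrow> rat" where
  "qnorm a b x = (q0 x)^2 - of_int a * (q1 x)^2 - of_int b * (q2 x)^2 + of_int (a*b) * (q3 x)^2"

text \<open>(a,b)_Q is split at the prime l iff z^2 = a x^2 + b y^2 has a nontrivial solution in Q_l,
  which (by compactness of Z_l) holds iff for every e there is a primitive solution modulo l^e.\<close>
definition locally_split :: "int \<Rightarrow> int \<Rightarrow> int \<Rightarrow> bool" where
  "locally_split l a b = (\<forall>e::nat. \<exists>x y z :: int.
      \<not> (l dvd x \<and> l dvd y \<and> l dvd z) \<and> [a * x^2 + b * y^2 = z^2] (mod l^e))"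

text \<open>(a,b)_Q is definite (ramified at infinity) iff a < 0 and b < 0.\<close>
definition ramified_exactly_at_p_inf :: "int \<Rightarrow> int \<Rightarrow> int \<Rightarrow> bool" where
  "ramified_exactly_at_p_inf p a b =
     (a < 0 \<and> b < 0 \<and> (\<forall>l::int. prime l \<longrightarrow> (\<not> locally_split l a b \<longleftrightarrow> l = p)))"

definition qlin :: "(nat \<Rightarrow> 'r) \<Rightarrow> ('r \<Rightarrow> rat) \<Rightarrow> (nat \<Rightarrow> quat) \<Rightarrow> quat" where
  "qlin c f e = qsc (f (c 0)) (e 0) + qsc (f (c 1)) (e 1) + qsc (f (c 2)) (e 2) + qsc (f (c 3)) (e 3)"

definition full_lattice :: "quat set \<Rightarrow> bool" where
  "full_lattice L = (\<exists>e :: nat \<Rightarrow> quat.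
      L = {qlin c of_int e | c :: nat \<Rightarrow> int. True} \<and>
      (\<forall>x. \<exists>c :: nat \<Rightarrow> rat. x = qlin c id e))"

definition is_order :: "int \<Rightarrow> int \<Rightarrow> quat set \<Rightarrow> bool" where
  "is_order a b Ord = (full_lattice Ord \<and> qone \<in> Ord \<and>
     (\<forall>x\<in>Ord. \<forall>y\<in>Ord. x + y \<in> Ord \<and> - x \<in> Ord \<and> qmul a b x y \<in> Ord))"

definition maximal_order :: "int \<Rightarrow> int \<Rightarrow> quat set \<Rightarrow> bool" where
  "maximal_order a b Ord = (is_order a b Ord \<and>
     (\<forall>Ord'. is_order a b Ord' \<and> Ord \<subseteq> Ord' \<longrightarrow> Ord' = Ord))"

definition qunits :: "int \<Rightarrow> int \<Rightarrow> quat set \<Rightarrow> quat set" where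
  "qunits a b Ord = {u \<in> Ord. \<exists>v\<in>Ord. qmul a b u v = qone \<and> qmul a b v u = qone}"

definition normset :: "int \<Rightarrow> int \<Rightarrow> quat set \<Rightarrow> nat \<Rightarrow> quat set" where
  "normset a b Ord k = {x \<in> Ord. qnorm a b x = of_nat k}"

definition unit_rep_system :: "int \<Rightarrow> int \<Rightarrow> quat set \<Rightarrow> nat \<Rightarrow> quat set \<Rightarrow> bool" where
  "unit_rep_system a b Ord k xs = (xs \<subseteq> normset a b Ord k \<and>
     (\<forall>x\<in>normset a b Ord k. \<exists>!r\<in>xs. \<exists>u\<in>qunits a b Ord. x = qmul a b r u))"

text \<open>(A, B, C, E) represents the matrix [[A, B], [C, E]].\<close>
type_synonym mat2 = "quat \<times> quat \<times> quat \<times> quat"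

fun mmul :: "int \<Rightarrow> int \<Rightarrow> mat2 \<Rightarrow> mat2 \<Rightarrow> mat2" where
  "mmul a b (x11, x12, x21, x22) (y11, y12, y21, y22) =
     (qmul a b x11 y11 + qmul a b x12 y21, qmul a b x11 y12 + qmul a b x12 y22,
      qmul a b x21 y11 + qmul a b x22 y21, qmul a b x21 y12 + qmul a b x22 y22)"

fun mstar :: "mat2 \<Rightarrow> mat2" where
  "mstar (x11, x12, x21, x22) = (qconj x11, qconj x21, qconj x12, qconj x22)"

definition mscalar :: "rat \<Rightarrow> mat2" where
  "mscalar r = (qof_rat r, 0, 0, qof_rat r)"

definition mone :: mat2 where "mone = mscalar 1"

definition GU2_n :: "int \<Rightarrow> int \<Rightarrow> nat \<Rightarrow> mat2 set" where
  "GU2_n a b n = {g. mmul a b g (mstar g) = mscalar (of_nat n)}"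

definition M2O_units :: "int \<Rightarrow> int \<Rightarrow> quat set \<Rightarrow> mat2 set" where
  "M2O_units a b Ord = {(x11, x12, x21, x22). x11 \<in> Ord \<and> x12 \<in> Ord \<and> x21 \<in> Ord \<and> x22 \<in> Ord \<and>
      (\<exists>h. mmul a b (x11, x12, x21, x22) h = mone \<and> mmul a b h (x11, x12, x21, x22) = mone)}"

definition Gamma1_diag :: "int \<Rightarrow> int \<Rightarrow> quat set \<Rightarrow> mat2 set" where
  "Gamma1_diag a b Ord = {(\<alpha>, 0, 0, \<beta>) | \<alpha> \<beta>. \<alpha> \<in> qunits a b Ord \<and> \<beta> \<in> qunits a b Ord}"

definition Gamma1_antidiag :: "int \<Rightarrow> int \<Rightarrow> quat set \<Rightarrow> mat2 set" where
  "Gamma1_antidiag a b Ord = {(0, \<alpha>, \<beta>, 0) | \<alpha> \<beta>. \<alpha> \<in> qunits a b Ord \<and> \<beta> \<in> qunits a b Ord}"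

definition Gamma1 :: "int \<Rightarrow> int \<Rightarrow> quat set \<Rightarrow> mat2 set" where
  "Gamma1 a b Ord = Gamma1_diag a b Ord \<union> Gamma1_antidiag a b Ord"

definition coset_reps :: "int \<Rightarrow> int \<Rightarrow> quat set \<Rightarrow> nat \<Rightarrow> mat2 set \<Rightarrow> bool" where
  "coset_reps a b Ord n Reps = (Reps \<subseteq> GU2_n a b n \<inter> M2O_units a b Ord \<and>
     (\<forall>g \<in> GU2_n a b n \<inter> M2O_units a b Ord. \<exists>!r\<in>Reps. \<exists>\<gamma>\<in>Gamma1 a b Ord. g = mmul a b r \<gamma>))"

definition Rset :: "int \<Rightarrow> int \<Rightarrow> quat set \<Rightarrow> nat \<Rightarrow> (nat \<Rightarrow> quat set) \<Rightarrow> nat \<Rightarrow> mat2 set" where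
  "Rset a b Ord n xs k = {(x, v, w, y) | x v w y. x \<in> xs k \<and> y \<in> xs k \<and>
      v \<in> normset a b Ord (n - k) \<and> w \<in> normset a b Ord (n - k) \<and>
      qmul a b x (qconj w) + qmul a b v (qconj y) = 0}"

end

theory Submission
  imports Defs
begin

text \<open>In a definite quaternion algebra the reduced norm is positive definite, and on an order it
  takes values in \<nat> (a rational whose powers have bounded denominators is an integer); in
  particular units have norm 1. A matrix g = [[A, B], [C, E]] in GU_2(D)_n has N(A) = N(E) = k and
  N(B) = N(C) = n - k. Right multiplication by a diagonal element of \<Gamma>^(1) replaces A and E by
  their chosen representatives in X_k, which puts g into R_k, and right multiplication by the
  antidiagonal matrix with entries 1 exchanges k and n - k, so one can take 2k \<ge> n. Conversely a
  diagonal element of \<Gamma>^(1) relates no two distinct elements of the sets R_k, and an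
  antidiagonal one only relates R_k to R_(n-k). Hence for odd n the R_k with k > n/2 are
  representatives, and for n = 2m only the pairs inside R_m have to be thinned out.\<close>

section \<open>Quaternion arithmetic\<close>

lemma quat_eqI: "q0 x = q0 y \<Longrightarrow> q1 x = q1 y \<Longrightarrow> q2 x = q2 y \<Longrightarrow> q3 x = q3 y \<Longrightarrow> x = y"
  by (cases x; cases y) auto

lemma quat_component_simps [simp]:
  "q0 0 = 0" "q1 0 = 0" "q2 0 = 0" "q3 0 = 0"
  "q0 (x + y) = q0 x + q0 y" "q1 (x + y) = q1 x + q1 y" "q2 (x + y) = q2 x + q2 y" "q3 (x + y) = q3 x + q3 y"
  "q0 (- x) = - q0 x" "q1 (- x) = - q1 x" "q2 (- x) = - q2 x" "q3 (- x) = - q3 x"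
  "q0 (x - y) = q0 x - q0 y" "q1 (x - y) = q1 x - q1 y" "q2 (x - y) = q2 x - q2 y" "q3 (x - y) = q3 x - q3 y"
  "q0 qone = 1" "q1 qone = 0" "q2 qone = 0" "q3 qone = 0"
  "q0 (qof_rat r) = r" "q1 (qof_rat r) = 0" "q2 (qof_rat r) = 0" "q3 (qof_rat r) = 0"
  "q0 (qsc r x) = r * q0 x" "q1 (qsc r x) = r * q1 x" "q2 (qsc r x) = r * q2 x" "q3 (qsc r x) = r * q3 x"
  "q0 (qconj x) = q0 x" "q1 (qconj x) = - q1 x" "q2 (qconj x) = - q2 x" "q3 (qconj x) = - q3 x"
  "q0 (qmul a b x y) = q0 x * q0 y + of_int a * q1 x * q1 y + of_int b * q2 x * q2 y - of_int (a*b) * q3 x * q3 y"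
  "q1 (qmul a b x y) = q0 x * q1 y + q1 x * q0 y - of_int b * q2 x * q3 y + of_int b * q3 x * q2 y"
  "q2 (qmul a b x y) = q0 x * q2 y + q2 x * q0 y + of_int a * q1 x * q3 y - of_int a * q3 x * q1 y"
  "q3 (qmul a b x y) = q0 x * q3 y + q3 x * q0 y + q1 x * q2 y - q2 x * q1 y"
  by (simp_all add: zero_quat_def plus_quat_def uminus_quat_def minus_quat_def
      qone_def qof_rat_def qsc_def qconj_def qmul_def)

instance quat :: ab_group_add
  by standard (auto intro!: quat_eqI)

lemma qmul_assoc: "qmul a b (qmul a b x y) z = qmul a b x (qmul a b y z)"
  by (rule quat_eqI) (simp_all add: algebra_simps)

lemma qmul_add_left: "qmul a b (x + y) z = qmul a b x z + qmul a b y z"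
  and qmul_add_right: "qmul a b z (x + y) = qmul a b z x + qmul a b z y"
  by (rule quat_eqI; simp add: algebra_simps)+

lemma qmul_zero [simp]: "qmul a b 0 x = 0" "qmul a b x 0 = 0"
  and qmul_qone [simp]: "qmul a b qone x = x" "qmul a b x qone = x"
  by (rule quat_eqI; simp)+

lemma qmul_cancel_right_inverse:
  "qmul a b u v = qone \<Longrightarrow> qmul a b (qmul a b x u) v = x"
  by (simp add: qmul_assoc)

lemma qmul_qof_rat: "qmul a b (qof_rat r) x = qsc r x" "qmul a b x (qof_rat r) = qsc r x"
  and qmul_qsc: "qmul a b (qsc r x) y = qsc r (qmul a b x y)" "qmul a b x (qsc r y) = qsc r (qmul a b x y)"
  by (rule quat_eqI; simp add: algebra_simps)+

lemma qsc_qsc: "qsc r (qsc s x) = qsc (r * s) x"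
  and qsc_one [simp]: "qsc 1 x = x"
  and qsc_zero [simp]: "qsc r 0 = 0"
  and qsc_add: "qsc r (x + y) = qsc r x + qsc r y"
  and qsc_qof_rat: "qsc r (qof_rat s) = qof_rat (r * s)"
  and qof_rat_add: "qof_rat r + qof_rat s = qof_rat (r + s)"
  and qof_rat_one: "qof_rat 1 = qone"
  by (rule quat_eqI; simp add: algebra_simps)+

lemma qof_rat_eq_iff: "qof_rat r = qof_rat s \<longleftrightarrow> r = s"
  by (metis quat_component_simps(21))

lemma qsc_eq_0D: "qsc r x = 0 \<Longrightarrow> r \<noteq> 0 \<Longrightarrow> x = 0"
  by (metis qsc_one qsc_qsc qsc_zero right_inverse mult.commute)

lemma qconj_qmul: "qconj (qmul a b x y) = qmul a b (qconj y) (qconj x)"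
  and qconj_qconj [simp]: "qconj (qconj x) = x"
  and qconj_add: "qconj (x + y) = qconj x + qconj y"
  and qconj_zero [simp]: "qconj 0 = 0"
  by (rule quat_eqI; simp add: algebra_simps)+

lemma qconj_eq_0_iff: "qconj x = 0 \<longleftrightarrow> x = 0"
  by (metis qconj_qconj qconj_zero)

lemma qmul_qconj_right: "qmul a b x (qconj x) = qof_rat (qnorm a b x)"
  and qmul_qconj_left: "qmul a b (qconj x) x = qof_rat (qnorm a b x)"
  by (rule quat_eqI; simp add: qnorm_def algebra_simps power2_eq_square)+

lemma qnorm_qconj [simp]: "qnorm a b (qconj x) = qnorm a b x"
  and qnorm_uminus [simp]: "qnorm a b (- x) = qnorm a b x"
  and qnorm_zero [simp]: "qnorm a b 0 = 0"
  and qnorm_qone [simp]: "qnorm a b qone = 1"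
  by (simp_all add: qnorm_def)

lemma qnorm_qmul: "qnorm a b (qmul a b x y) = qnorm a b x * qnorm a b y"
  unfolding qnorm_def by (simp add: algebra_simps power2_eq_square)

lemma qmul_qconj_cancel:
  "qmul a b (qmul a b x (qconj w)) (qmul a b w z) = qsc (qnorm a b w) (qmul a b x z)"
  by (simp add: qmul_assoc[symmetric]) (simp add: qmul_assoc qmul_qconj_left qmul_qof_rat qmul_qsc)

lemma qnorm_as_sum_of_squares:
  "qnorm a b x = (q0 x)^2 + (- of_int a) * (q1 x)^2 + (- of_int b) * (q2 x)^2 + of_int (a * b) * (q3 x)^2"
  by (simp add: qnorm_def)

lemma qnorm_summands_nonneg:
  assumes "a < 0" "b < 0"
  shows "0 \<le> (- of_int a) * (q1 x)^2" "0 \<le> (- of_int b) * (q2 x)^2"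
    "0 \<le> of_int (a * b) * (q3 x)^2"
  using assms by (simp_all add: mult_nonpos_nonneg mult_nonpos_nonpos)

lemma qnorm_nonneg: "a < 0 \<Longrightarrow> b < 0 \<Longrightarrow> 0 \<le> qnorm a b x"
  using qnorm_summands_nonneg[of a b x] zero_le_power2[of "q0 x"]
  unfolding qnorm_as_sum_of_squares by linarith

lemma qnorm_eq_0_iff:
  assumes "a < 0" "b < 0"
  shows "qnorm a b x = 0 \<longleftrightarrow> x = 0"
proof
  assume "qnorm a b x = 0"
  then have "(q0 x)^2 = 0" "(- of_int a) * (q1 x)^2 = 0" "(- of_int b) * (q2 x)^2 = 0"
    "of_int (a * b) * (q3 x)^2 = (0::rat)"
    using qnorm_summands_nonneg[OF assms, of x] zero_le_power2[of "q0 x"]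
    unfolding qnorm_as_sum_of_squares by linarith+
  then show "x = 0"
    using assms by (intro quat_eqI) auto
qed simp

section \<open>Norms on an order are integers\<close>

lemma finite_set_common_denominator:
  fixes S :: "rat set"
  assumes "finite S"
  shows "\<exists>d::int. d > 0 \<and> (\<forall>r\<in>S. of_int d * r \<in> \<int>)"
  using assms
proof (induction S rule: finite_induct)
  case empty
  show ?case by (intro exI[of _ 1]) auto
next
  case (insert r S)
  then obtain d where d: "d > 0" "\<forall>s\<in>S. of_int d * s \<in> \<int>" by auto
  obtain p q where pq: "quotient_of r = (p, q)" by force
  have q: "q > 0" and r: "r = of_int p / of_int q"
    using pq quotient_of_denom_pos quotient_of_div by blast+
  have "of_int (d * q) * r = of_int (d * p)" using q r by simp
  moreover have "of_int (d * q) * s \<in> \<int>" if "s \<in> S" for s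
  proof -
    have "of_int (d * q) * s = of_int q * (of_int d * s)" by simp
    then show ?thesis using d(2) that by (metis Ints_mult Ints_of_int)
  qed
  ultimately show ?case
    using d q by (intro exI[of _ "d * q"]) (auto simp only: Ints_of_int insert_iff mult_pos_pos)
qed

text \<open>If all powers of r have denominator dividing D, then every power of the denominator q of r
  divides D; this forces q = 1.\<close>

lemma Ints_if_powers_bounded_denominator:
  fixes r :: rat and D :: int
  assumes D: "D > 0" and powers: "\<forall>k. of_int D * r ^ k \<in> \<int>"
  shows "r \<in> \<int>"
proof -
  obtain p q where pq: "quotient_of r = (p, q)" by force
  have q: "q > 0" and r: "r = of_int p / of_int q" and cop: "coprime p q"
    using pq quotient_of_denom_pos quotient_of_div quotient_of_coprime by blast+
  have q_pow_dvd: "q ^ k dvd D" for k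
  proof -
    obtain z where "of_int D * r ^ k = of_int z" using powers Ints_cases by metis
    then have "of_int D * of_int p ^ k = (of_int z * of_int q ^ k :: rat)"
      using q r by (simp add: power_divide field_simps)
    then have "D * p ^ k = z * q ^ k" by (metis of_int_eq_iff of_int_mult of_int_power)
    then have "q ^ k dvd D * p ^ k" by simp
    moreover have "coprime (q ^ k) (p ^ k)" using cop by (simp add: coprime_commute)
    ultimately show ?thesis using coprime_dvd_mult_left_iff by blast
  qed
  have "q = 1"
  proof (rule ccontr)
    assume "q \<noteq> 1"
    then have "(2::int) ^ nat D \<le> q ^ nat D" using q by (simp add: power_mono)
    also have "\<dots> \<le> D" using q_pow_dvd[of "nat D"] D by (simp add: zdvd_imp_le)
    also have "D < 2 ^ nat D"
      using of_nat_less_iff[where 'a=int, THEN iffD2, OF less_exp[of "nat D"]] D by simp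
    finally show False by simp
  qed
  then show ?thesis using r by simp
qed

lemma full_lattice_qnorm_denominator:
  assumes "full_lattice L"
  shows "\<exists>D::int. D > 0 \<and> (\<forall>y\<in>L. of_int D * qnorm a b y \<in> \<int>)"
proof -
  obtain e where e: "L = {qlin c of_int e | c :: nat \<Rightarrow> int. True}"
    using assms unfolding full_lattice_def by blast
  let ?S = "(\<lambda>(f, i). f (e i)) ` ({q0, q1, q2, q3} \<times> {0, 1, 2, 3})"
  obtain d where d: "d > 0" "\<forall>r\<in>?S. of_int d * r \<in> \<int>"
    using finite_set_common_denominator[of ?S] by auto
  have coord: "of_int d * f y \<in> \<int>" if "y \<in> L" "f \<in> {q0, q1, q2, q3}" for y f
  proof -
    obtain c where y: "y = qlin c of_int e" using e \<open>y \<in> L\<close> by blast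
    have f_e: "of_int d * f (e i) \<in> \<int>" if "i \<in> {0, 1, 2, 3}" for i
      using d(2) image_eqI[of _ "\<lambda>(f, i). f (e i)" "(f, i)"] \<open>f \<in> _\<close> that by auto
    have "of_int d * f y = of_int (c 0) * (of_int d * f (e 0)) + of_int (c 1) * (of_int d * f (e 1))
      + of_int (c 2) * (of_int d * f (e 2)) + of_int (c 3) * (of_int d * f (e 3))"
      using \<open>f \<in> _\<close> unfolding y qlin_def by (elim insertE emptyE) (simp_all add: algebra_simps)
    then show ?thesis using f_e by simp
  qed
  have "of_int (d * d) * qnorm a b y \<in> \<int>" if "y \<in> L" for y
  proof -
    have "of_int (d * d) * qnorm a b y = (of_int d * q0 y)^2 - of_int a * (of_int d * q1 y)^2
      - of_int b * (of_int d * q2 y)^2 + of_int (a * b) * (of_int d * q3 y)^2"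
      unfolding qnorm_def by (simp add: algebra_simps power2_eq_square)
    then show ?thesis using coord[OF that] by simp
  qed
  then show ?thesis using d(1) by (intro exI[of _ "d * d"]) auto
qed

lemma order_qnorm_in_Ints:
  assumes "is_order a b Ord" "x \<in> Ord"
  shows "qnorm a b x \<in> \<int>"
proof -
  have closed: "\<forall>x\<in>Ord. \<forall>y\<in>Ord. qmul a b x y \<in> Ord" "qone \<in> Ord" "full_lattice Ord"
    using assms(1) unfolding is_order_def by auto
  obtain D where D: "D > 0" "\<forall>y\<in>Ord. of_int D * qnorm a b y \<in> \<int>"
    using full_lattice_qnorm_denominator[OF closed(3)] by blast
  define pow where "pow k = (qmul a b x ^^ k) qone" for k
  have "pow k \<in> Ord" for k
    by (induction k) (simp_all add: pow_def closed assms(2))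
  moreover have "qnorm a b (pow k) = qnorm a b x ^ k" for k
    by (induction k) (simp_all add: pow_def qnorm_qmul)
  ultimately show ?thesis
    using Ints_if_powers_bounded_denominator[OF D(1)] D(2) by metis
qed

lemma qunits_subset: "qunits a b Ord \<subseteq> Ord"
  by (auto simp: qunits_def)

lemma qunits_inverse:
  "u \<in> qunits a b Ord \<Longrightarrow> \<exists>v\<in>qunits a b Ord. qmul a b u v = qone \<and> qmul a b v u = qone"
  unfolding qunits_def by blast

section \<open>The similitude group GU_2(D)_n\<close>

lemma mstar_mmul: "mstar (mmul a b g h) = mmul a b (mstar h) (mstar g)"
  by (cases g; cases h) (simp add: qconj_add qconj_qmul add.commute)

lemma mmul_assoc: "mmul a b (mmul a b f g) h = mmul a b f (mmul a b g h)"
  by (cases f; cases g; cases h) (simp add: qmul_add_left qmul_add_right qmul_assoc add_ac)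

lemma mone_eq: "mone = (qone, 0, 0, qone)"
  by (simp add: mone_def mscalar_def qof_rat_one)

lemma mmul_mone [simp]: "mmul a b g mone = g" "mmul a b mone g = g"
  by (cases g; simp add: mone_eq)+

lemma GU2_n_iff:
  "(A, B, C, E) \<in> GU2_n a b n \<longleftrightarrow>
     qnorm a b A + qnorm a b B = of_nat n \<and> qnorm a b C + qnorm a b E = of_nat n \<and>
     qmul a b A (qconj C) + qmul a b B (qconj E) = 0"
proof -
  have "qmul a b C (qconj A) + qmul a b E (qconj B)
      = qconj (qmul a b A (qconj C) + qmul a b B (qconj E))"
    by (simp add: qconj_add qconj_qmul)
  then show ?thesis
    unfolding GU2_n_def mscalar_def
    by (simp add: qmul_qconj_right qof_rat_add qof_rat_eq_iff qconj_eq_0_iff) auto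
qed

text \<open>g g* = n implies g* g = n: the proof divides by N(A), so it needs definiteness.\<close>

lemma GU2_n_mstar:
  assumes ab: "a < 0" "b < 0" and n: "n > 0" and g: "g \<in> GU2_n a b n"
  shows "mstar g \<in> GU2_n a b n"
proof -
  obtain A B C E where g_eq: "g = (A, B, C, E)" by (cases g)
  have row1: "qnorm a b A + qnorm a b B = of_nat n" and row2: "qnorm a b C + qnorm a b E = of_nat n"
    and orth: "qmul a b A (qconj C) + qmul a b B (qconj E) = 0"
    using g unfolding g_eq GU2_n_iff by blast+
  have "qmul a b A (qconj C) = - qmul a b B (qconj E)" using orth by (simp add: eq_neg_iff_add_eq_0)
  then have prod: "qnorm a b A * qnorm a b C = qnorm a b B * qnorm a b E"
    by (metis qnorm_qmul qnorm_qconj qnorm_uminus)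
  have "qnorm a b C * of_nat n = qnorm a b C * (qnorm a b A + qnorm a b B)" using row1 by simp
  also have "\<dots> = qnorm a b B * (qnorm a b C + qnorm a b E)" using prod by (simp add: algebra_simps)
  finally have "qnorm a b C * of_nat n = qnorm a b B * of_nat n" using row2 by simp
  then have NC: "qnorm a b C = qnorm a b B" using n by simp
  then have NE: "qnorm a b E = qnorm a b A" using row1 row2 by simp
  have col_orth: "qmul a b (qconj A) B + qmul a b (qconj C) E = 0"
  proof (cases "A = 0")
    case True
    then show ?thesis using NE qnorm_eq_0_iff[OF ab] by simp
  next
    case False
    let ?k = "qnorm a b A"
    have "qmul a b (qmul a b (qconj A) (qmul a b A (qconj C) + qmul a b B (qconj E))) E = 0"
      using orth by simp
    then have "qsc ?k (qmul a b (qconj C) E) + qsc ?k (qmul a b (qconj A) B) = 0"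
      using NE by (simp add: qmul_add_left qmul_add_right qmul_assoc[symmetric] qmul_qconj_left
          qmul_qof_rat qmul_qsc) (simp add: qmul_assoc qmul_qconj_left qmul_qof_rat qmul_qsc)
    then have "qsc ?k (qmul a b (qconj A) B + qmul a b (qconj C) E) = 0"
      by (simp add: qsc_add add.commute)
    moreover have "?k \<noteq> 0" using False qnorm_eq_0_iff[OF ab] by blast
    ultimately show ?thesis using qsc_eq_0D by blast
  qed
  show ?thesis
    unfolding g_eq mstar.simps GU2_n_iff using row1 row2 NC NE col_orth by simp
qed

lemma mmul_mscalar_commute: "mmul a b g (mscalar r) = mmul a b (mscalar r) g"
  by (cases g) (simp add: mscalar_def qmul_qof_rat)

lemma mmul_mscalar_mscalar: "mmul a b (mscalar r) (mscalar s) = mscalar (r * s)"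
  by (simp add: mscalar_def qmul_qof_rat qsc_qof_rat mult.commute)

lemma GU2_n_invertible:
  assumes ab: "a < 0" "b < 0" and n: "n > 0" and g: "g \<in> GU2_n a b n"
  defines "h \<equiv> mmul a b (mscalar (1 / of_nat n)) (mstar g)"
  shows "mmul a b g h = mone" "mmul a b h g = mone"
proof -
  have "mmul a b (mstar g) g = mscalar (of_nat n)"
    using GU2_n_mstar[OF ab n g] by (cases g) (simp add: GU2_n_def)
  moreover have "mmul a b g (mstar g) = mscalar (of_nat n)"
    using g by (simp add: GU2_n_def)
  ultimately show "mmul a b g h = mone" "mmul a b h g = mone"
    unfolding h_def mone_def using n
    by (simp_all add: mmul_assoc[symmetric] mmul_mscalar_commute)
      (simp_all add: mmul_assoc mmul_mscalar_mscalar)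
qed

lemma Gamma1_cases:
  assumes "\<gamma> \<in> Gamma1 a b Ord"
  obtains (diag) \<alpha> \<beta> where "\<alpha> \<in> qunits a b Ord" "\<beta> \<in> qunits a b Ord" "\<gamma> = (\<alpha>, 0, 0, \<beta>)"
  | (antidiag) \<alpha> \<beta> where "\<alpha> \<in> qunits a b Ord" "\<beta> \<in> qunits a b Ord" "\<gamma> = (0, \<alpha>, \<beta>, 0)"
  using assms unfolding Gamma1_def Gamma1_diag_def Gamma1_antidiag_def by blast

section \<open>Units and the group \<Gamma>^(1)\<close>

locale definite_order =
  fixes a b :: int and Ord :: "quat set"
  assumes order: "is_order a b Ord" and a_neg: "a < 0" and b_neg: "b < 0"
begin

lemma qmul_closed: "x \<in> Ord \<Longrightarrow> y \<in> Ord \<Longrightarrow> qmul a b x y \<in> Ord"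
  using order unfolding is_order_def by blast

lemma qnorm_in_Nats:
  assumes "x \<in> Ord"
  obtains k where "qnorm a b x = of_nat k"
proof -
  obtain z where z: "qnorm a b x = of_int z"
    using order_qnorm_in_Ints[OF order assms] Ints_cases by metis
  then have "z \<ge> 0" using qnorm_nonneg[OF a_neg b_neg, of x] by simp
  then show ?thesis using z that[of "nat z"] by simp
qed

lemma qone_in_qunits: "qone \<in> qunits a b Ord"
  using order unfolding qunits_def is_order_def by auto

lemma qunits_qmul:
  assumes u: "u \<in> qunits a b Ord" and v: "v \<in> qunits a b Ord"
  shows "qmul a b u v \<in> qunits a b Ord"
proof -
  obtain u' where u': "u' \<in> Ord" "qmul a b u u' = qone" "qmul a b u' u = qone"
    using u unfolding qunits_def by blast
  obtain v' where v': "v' \<in> Ord" "qmul a b v v' = qone" "qmul a b v' v = qone"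
    using v unfolding qunits_def by blast
  have "qmul a b (qmul a b u v) (qmul a b v' u') = qone"
    "qmul a b (qmul a b v' u') (qmul a b u v) = qone"
    using u' v' by (simp_all add: qmul_assoc[symmetric] qmul_cancel_right_inverse)
  moreover have "qmul a b u v \<in> Ord" "qmul a b v' u' \<in> Ord"
    using u v u' v' qunits_subset[of a b Ord] by (blast intro: qmul_closed)+
  ultimately show ?thesis unfolding qunits_def by blast
qed

lemma qnorm_qunit:
  assumes u: "u \<in> qunits a b Ord"
  shows "qnorm a b u = 1"
proof -
  obtain v where v: "v \<in> Ord" "qmul a b u v = qone" using u unfolding qunits_def by blast
  obtain i j where "qnorm a b u = of_nat i" "qnorm a b v = of_nat j"
    using qnorm_in_Nats v(1) qunits_subset u by (metis subsetD)
  moreover have "qnorm a b u * qnorm a b v = 1" using qnorm_qmul[of a b u v] v(2) by simp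
  ultimately show ?thesis by (metis nat_1_eq_mult_iff of_nat_1 of_nat_eq_iff of_nat_mult)
qed

lemma qmul_qunit_qconj: "u \<in> qunits a b Ord \<Longrightarrow> qmul a b u (qconj u) = qone"
  by (simp add: qmul_qconj_right qnorm_qunit qof_rat_one)

lemma qnorm_qmul_qunit: "u \<in> qunits a b Ord \<Longrightarrow> qnorm a b (qmul a b x u) = qnorm a b x"
  by (simp add: qnorm_qmul qnorm_qunit)

lemma qmul_left_cancel:
  assumes x: "x \<noteq> 0" and eq: "qmul a b x u = qmul a b x u'"
  shows "u = u'"
proof -
  have N: "qnorm a b x \<noteq> 0" using x qnorm_eq_0_iff[OF a_neg b_neg] by blast
  have "qmul a b (qmul a b (qconj x) x) u = qmul a b (qmul a b (qconj x) x) u'"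
    using eq by (simp add: qmul_assoc)
  then have "qsc (qnorm a b x) u = qsc (qnorm a b x) u'"
    by (simp add: qmul_qconj_left qmul_qof_rat)
  then have "qsc (1 / qnorm a b x) (qsc (qnorm a b x) u) = qsc (1 / qnorm a b x) (qsc (qnorm a b x) u')"
    by simp
  then show ?thesis using N by (simp add: qsc_qsc)
qed

lemma mone_in_Gamma1: "mone \<in> Gamma1 a b Ord"
  unfolding Gamma1_def Gamma1_diag_def mone_eq using qone_in_qunits by blast

lemma Gamma1_mmul:
  assumes "\<gamma> \<in> Gamma1 a b Ord" "\<delta> \<in> Gamma1 a b Ord"
  shows "mmul a b \<gamma> \<delta> \<in> Gamma1 a b Ord"
  using assms(1)
  by (cases rule: Gamma1_cases; use assms(2) in \<open>cases rule: Gamma1_cases\<close>)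
    (auto simp: Gamma1_def Gamma1_diag_def Gamma1_antidiag_def intro: qunits_qmul)

lemma Gamma1_inverse:
  assumes "\<gamma> \<in> Gamma1 a b Ord"
  shows "\<exists>\<gamma>'\<in>Gamma1 a b Ord. mmul a b \<gamma> \<gamma>' = mone"
  using assms
proof (cases rule: Gamma1_cases)
  case (diag \<alpha> \<beta>)
  obtain \<alpha>' \<beta>' where "\<alpha>' \<in> qunits a b Ord" "qmul a b \<alpha> \<alpha>' = qone"
    "\<beta>' \<in> qunits a b Ord" "qmul a b \<beta> \<beta>' = qone"
    using qunits_inverse diag(1,2) by blast
  then show ?thesis using diag(3) unfolding Gamma1_def Gamma1_diag_def mone_eq
    by (intro bexI[of _ "(\<alpha>', 0, 0, \<beta>')"]) auto
next
  case (antidiag \<alpha> \<beta>)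
  obtain \<alpha>' \<beta>' where "\<alpha>' \<in> qunits a b Ord" "qmul a b \<alpha> \<alpha>' = qone"
    "\<beta>' \<in> qunits a b Ord" "qmul a b \<beta> \<beta>' = qone"
    using qunits_inverse antidiag(1,2) by blast
  then show ?thesis using antidiag(3) unfolding Gamma1_def Gamma1_antidiag_def mone_eq
    by (intro bexI[of _ "(0, \<beta>', \<alpha>', 0)"]) auto
qed

lemma Gamma1_mmul_mstar: "\<gamma> \<in> Gamma1 a b Ord \<Longrightarrow> mmul a b \<gamma> (mstar \<gamma>) = mone"
  by (erule Gamma1_cases) (simp_all add: mone_eq qmul_qunit_qconj)

lemma GU2_n_mmul_Gamma1:
  assumes "g \<in> GU2_n a b n" "\<gamma> \<in> Gamma1 a b Ord"
  shows "mmul a b g \<gamma> \<in> GU2_n a b n"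
  using assms Gamma1_mmul_mstar[OF assms(2)]
  by (simp add: GU2_n_def mstar_mmul mmul_assoc) (simp add: mmul_assoc[symmetric])

lemma Gamma1_orbits_eq:
  assumes "\<gamma>1 \<in> Gamma1 a b Ord" "\<gamma>2 \<in> Gamma1 a b Ord" "mmul a b r1 \<gamma>1 = mmul a b r2 \<gamma>2"
  shows "\<exists>\<delta>\<in>Gamma1 a b Ord. r2 = mmul a b r1 \<delta>"
proof -
  obtain \<gamma>' where \<gamma>': "\<gamma>' \<in> Gamma1 a b Ord" "mmul a b \<gamma>2 \<gamma>' = mone"
    using Gamma1_inverse[OF assms(2)] by blast
  have "r2 = mmul a b (mmul a b r2 \<gamma>2) \<gamma>'" using \<gamma>'(2) by (simp add: mmul_assoc)
  also have "\<dots> = mmul a b r1 (mmul a b \<gamma>1 \<gamma>')" by (simp add: assms(3)[symmetric] mmul_assoc)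
  finally show ?thesis using Gamma1_mmul[OF assms(1) \<gamma>'(1)] by blast
qed

lemma coset_repsI:
  assumes "Reps \<subseteq> GU2_n a b n \<inter> M2O_units a b Ord"
    and covers: "\<And>g. g \<in> GU2_n a b n \<inter> M2O_units a b Ord \<Longrightarrow>
        \<exists>r\<in>Reps. \<exists>\<gamma>\<in>Gamma1 a b Ord. g = mmul a b r \<gamma>"
    and separates: "\<And>r1 r2 \<delta>. r1 \<in> Reps \<Longrightarrow> r2 \<in> Reps \<Longrightarrow> \<delta> \<in> Gamma1 a b Ord \<Longrightarrow>
        r2 = mmul a b r1 \<delta> \<Longrightarrow> r1 = r2"
  shows "coset_reps a b Ord n Reps"
  unfolding coset_reps_def
proof (intro conjI ballI assms(1))
  fix g assume g: "g \<in> GU2_n a b n \<inter> M2O_units a b Ord"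
  show "\<exists>!r\<in>Reps. \<exists>\<gamma>\<in>Gamma1 a b Ord. g = mmul a b r \<gamma>"
  proof (rule ex_ex1I)
    show "\<exists>r. r \<in> Reps \<and> (\<exists>\<gamma>\<in>Gamma1 a b Ord. g = mmul a b r \<gamma>)" using covers[OF g] by blast
  next
    fix r1 r2
    assume "r1 \<in> Reps \<and> (\<exists>\<gamma>\<in>Gamma1 a b Ord. g = mmul a b r1 \<gamma>)"
      and "r2 \<in> Reps \<and> (\<exists>\<gamma>\<in>Gamma1 a b Ord. g = mmul a b r2 \<gamma>)"
    then show "r1 = r2" using Gamma1_orbits_eq separates by metis
  qed
qed

end

section \<open>The representative sets R_k\<close>

lemma Rset_iff:
  "(x, v, w, y) \<in> Rset a b Ord n xs k \<longleftrightarrow> x \<in> xs k \<and> y \<in> xs k \<and>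
     v \<in> normset a b Ord (n - k) \<and> w \<in> normset a b Ord (n - k) \<and>
     qmul a b x (qconj w) + qmul a b v (qconj y) = 0"
  unfolding Rset_def by blast

locale unit_rep_systems = definite_order +
  fixes xs :: "nat \<Rightarrow> quat set"
  assumes rep_system: "unit_rep_system a b Ord k (xs k)"
begin

lemma rep_in_normset: "x \<in> xs k \<Longrightarrow> x \<in> Ord \<and> qnorm a b x = of_nat k"
  using rep_system[of k] unfolding unit_rep_system_def normset_def by blast

lemma rep_exists:
  "z \<in> Ord \<Longrightarrow> qnorm a b z = of_nat k \<Longrightarrow> \<exists>x\<in>xs k. \<exists>u\<in>qunits a b Ord. z = qmul a b x u"
  using rep_system[of k] unfolding unit_rep_system_def normset_def by blast

lemma rep_unique:
  assumes "x \<in> xs k" "x' \<in> xs k" "u \<in> qunits a b Ord" "x = qmul a b x' u"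
  shows "x = x'"
proof -
  have "x \<in> normset a b Ord k" using rep_in_normset[OF assms(1)] by (simp add: normset_def)
  then have "\<exists>!r\<in>xs k. \<exists>u\<in>qunits a b Ord. x = qmul a b r u"
    using rep_system[of k] unfolding unit_rep_system_def by blast
  moreover have "\<exists>u\<in>qunits a b Ord. x = qmul a b x u" using qone_in_qunits by force
  ultimately show ?thesis using assms by blast
qed

lemma Rset_qnorms:
  "(x, v, w, y) \<in> Rset a b Ord n xs k \<Longrightarrow>
     qnorm a b x = of_nat k \<and> qnorm a b y = of_nat k \<and>
     qnorm a b v = of_nat (n - k) \<and> qnorm a b w = of_nat (n - k)"
  unfolding Rset_iff normset_def using rep_in_normset by blast

lemma Rset_subset:
  assumes "n > 0" "k \<le> n"
  shows "Rset a b Ord n xs k \<subseteq> GU2_n a b n \<inter> M2O_units a b Ord"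
proof
  fix r assume r: "r \<in> Rset a b Ord n xs k"
  obtain x v w y where r_eq: "r = (x, v, w, y)" by (cases r)
  have "r \<in> GU2_n a b n"
    using r Rset_qnorms[of x v w y n k] assms(2) unfolding r_eq Rset_iff GU2_n_iff
    by (simp add: of_nat_diff)
  moreover have "x \<in> Ord" "v \<in> Ord" "w \<in> Ord" "y \<in> Ord"
    using r rep_in_normset unfolding r_eq Rset_iff normset_def by blast+
  ultimately show "r \<in> GU2_n a b n \<inter> M2O_units a b Ord"
    using GU2_n_invertible[OF a_neg b_neg assms(1)] unfolding r_eq M2O_units_def by blast
qed

lemma Rset_diag_related_eq:
  assumes r1: "r1 \<in> Rset a b Ord n xs k1" and r2: "r2 \<in> Rset a b Ord n xs k2" and "k1 \<ge> 1"
    and \<alpha>: "\<alpha> \<in> qunits a b Ord" and \<beta>: "\<beta> \<in> qunits a b Ord"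
    and r2_eq: "r2 = mmul a b r1 (\<alpha>, 0, 0, \<beta>)"
  shows "r1 = r2"
proof -
  obtain x v w y where r1_eq: "r1 = (x, v, w, y)" by (cases r1)
  have x: "x \<in> xs k1" "qmul a b x \<alpha> \<in> xs k2" and y: "y \<in> xs k1" "qmul a b y \<beta> \<in> xs k2"
    using r1 r2 unfolding r2_eq r1_eq by (simp_all add: Rset_iff)
  have "of_nat k2 = qnorm a b (qmul a b x \<alpha>)" using rep_in_normset[OF x(2)] by simp
  also have "\<dots> = of_nat k1" using rep_in_normset[OF x(1)] \<alpha> by (simp add: qnorm_qmul_qunit)
  finally have "k2 = k1" by simp
  then have "qmul a b x \<alpha> = qmul a b x qone" "qmul a b y \<beta> = qmul a b y qone"
    using rep_unique x y \<alpha> \<beta> by auto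
  moreover have "x \<noteq> 0" "y \<noteq> 0"
    using rep_in_normset[OF x(1)] rep_in_normset[OF y(1)] \<open>k1 \<ge> 1\<close> by auto
  ultimately have "\<alpha> = qone" "\<beta> = qone" using qmul_left_cancel by blast+
  then show ?thesis unfolding r2_eq by (simp add: mone_eq[symmetric])
qed

lemma Rset_antidiag_related_index:
  assumes r1: "r1 \<in> Rset a b Ord n xs k1" and r2: "r2 \<in> Rset a b Ord n xs k2"
    and \<beta>: "\<beta> \<in> qunits a b Ord" and r2_eq: "r2 = mmul a b r1 (0, \<alpha>, \<beta>, 0)"
  shows "k2 = n - k1"
proof -
  obtain x v w y where r1_eq: "r1 = (x, v, w, y)" by (cases r1)
  have "r2 = (qmul a b v \<beta>, qmul a b x \<alpha>, qmul a b y \<beta>, qmul a b w \<alpha>)" unfolding r2_eq r1_eq by simp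
  then have "of_nat k2 = qnorm a b (qmul a b v \<beta>)" using r2 Rset_qnorms by auto
  also have "\<dots> = of_nat (n - k1)" using r1 Rset_qnorms \<beta> unfolding r1_eq by (simp add: qnorm_qmul_qunit)
  finally show ?thesis by simp
qed

lemma Rset_Gamma1_related:
  assumes "r1 \<in> Rset a b Ord n xs k1" "r2 \<in> Rset a b Ord n xs k2" "k1 \<ge> 1"
    and "\<delta> \<in> Gamma1 a b Ord" "r2 = mmul a b r1 \<delta>"
  shows "r1 = r2 \<or> k2 = n - k1"
  using assms(4)
  by (cases rule: Gamma1_cases)
    (use assms Rset_diag_related_eq Rset_antidiag_related_index in blast)+

text \<open>Right multiplication by diag(u^-1, u'^-1), where A = x u and E = y u' with x, y chosen
  representatives, moves g into R_k, where k = N(A).\<close>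

lemma GU2_n_orbit_meets_Rset:
  assumes n: "n > 0" and g: "(A, B, C, E) \<in> GU2_n a b n"
    and entries: "A \<in> Ord" "B \<in> Ord" "C \<in> Ord" "E \<in> Ord"
    and k: "qnorm a b A = of_nat k"
  shows "\<exists>r\<in>Rset a b Ord n xs k. \<exists>\<gamma>\<in>Gamma1 a b Ord. (A, B, C, E) = mmul a b r \<gamma>"
proof -
  have "qnorm a b A + qnorm a b B = of_nat n" "qnorm a b C + qnorm a b E = of_nat n"
    "qnorm a b A + qnorm a b C = of_nat n" "qnorm a b B + qnorm a b E = of_nat n"
    using g GU2_n_mstar[OF a_neg b_neg n g] by (simp_all add: GU2_n_iff)
  moreover have "k \<le> n"
    using calculation(1) k qnorm_nonneg[OF a_neg b_neg, of B] by simp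
  ultimately have NB: "qnorm a b B = of_nat (n - k)" and NC: "qnorm a b C = of_nat (n - k)"
    and NE: "qnorm a b E = of_nat k"
    using k by (simp_all add: of_nat_diff)
  obtain x u where x: "x \<in> xs k" "u \<in> qunits a b Ord" "A = qmul a b x u"
    using rep_exists[OF entries(1) k] by blast
  obtain y u' where y: "y \<in> xs k" "u' \<in> qunits a b Ord" "E = qmul a b y u'"
    using rep_exists[OF entries(4) NE] by blast
  obtain \<alpha> where \<alpha>: "\<alpha> \<in> qunits a b Ord" "qmul a b u \<alpha> = qone" "qmul a b \<alpha> u = qone"
    using qunits_inverse[OF x(2)] by blast
  obtain \<beta> where \<beta>: "\<beta> \<in> qunits a b Ord" "qmul a b u' \<beta> = qone" "qmul a b \<beta> u' = qone"
    using qunits_inverse[OF y(2)] by blast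
  define r where "r = mmul a b (A, B, C, E) (\<alpha>, 0, 0, \<beta>)"
  have diag_in: "(\<alpha>, 0, 0, \<beta>) \<in> Gamma1 a b Ord" "(u, 0, 0, u') \<in> Gamma1 a b Ord"
    unfolding Gamma1_def Gamma1_diag_def using \<alpha> \<beta> x y by blast+
  have r_eq: "r = (x, qmul a b B \<beta>, qmul a b C \<alpha>, y)"
    unfolding r_def using x(3) y(3) \<alpha>(2) \<beta>(2) by (simp add: qmul_cancel_right_inverse)
  have "r \<in> GU2_n a b n" unfolding r_def using GU2_n_mmul_Gamma1[OF g diag_in(1)] .
  moreover have "qmul a b B \<beta> \<in> normset a b Ord (n - k)" "qmul a b C \<alpha> \<in> normset a b Ord (n - k)"
    using NB NC entries \<alpha>(1) \<beta>(1) qunits_subset[of a b Ord]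
    by (auto simp: normset_def qnorm_qmul_qunit intro!: qmul_closed)
  ultimately have "r \<in> Rset a b Ord n xs k"
    using x(1) y(1) unfolding r_eq Rset_iff GU2_n_iff by blast
  moreover have "(A, B, C, E) = mmul a b r (u, 0, 0, u')"
    unfolding r_def mmul_assoc using \<alpha>(3) \<beta>(3) by (simp add: mone_eq[symmetric])
  ultimately show ?thesis using diag_in(2) by blast
qed

text \<open>If N(A) < n/2, apply the lemma above to g J with J = antidiag(1, 1) instead.\<close>

lemma GU2_n_M2O_units_orbit_meets_Rset:
  assumes n: "n > 0" and g: "g \<in> GU2_n a b n \<inter> M2O_units a b Ord"
  shows "\<exists>k. n \<le> 2 * k \<and> k \<le> n \<and>
    (\<exists>r\<in>Rset a b Ord n xs k. \<exists>\<gamma>\<in>Gamma1 a b Ord. g = mmul a b r \<gamma>)"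
proof -
  obtain A B C E where g_eq: "g = (A, B, C, E)" by (cases g)
  have entries: "A \<in> Ord" "B \<in> Ord" "C \<in> Ord" "E \<in> Ord"
    and gu: "(A, B, C, E) \<in> GU2_n a b n"
    using g unfolding g_eq M2O_units_def by blast+
  obtain k where k: "qnorm a b A = of_nat k" using qnorm_in_Nats[OF entries(1)] .
  have row: "qnorm a b A + qnorm a b B = of_nat n" using gu by (simp add: GU2_n_iff)
  then have "k \<le> n" using k qnorm_nonneg[OF a_neg b_neg, of B] by simp
  show ?thesis
  proof (cases "n \<le> 2 * k")
    case True
    then show ?thesis using GU2_n_orbit_meets_Rset[OF n gu entries k] \<open>k \<le> n\<close> g_eq by blast
  next
    case False
    define J where "J = (0 :: quat, qone, qone, 0 :: quat)"
    have J: "J \<in> Gamma1 a b Ord"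
      unfolding J_def Gamma1_def Gamma1_antidiag_def using qone_in_qunits by blast
    have gJ: "mmul a b (A, B, C, E) J = (B, A, E, C)" unfolding J_def by simp
    have "qnorm a b B = of_nat (n - k)" using row k \<open>k \<le> n\<close> by (simp add: of_nat_diff)
    then obtain r \<gamma> where r: "r \<in> Rset a b Ord n xs (n - k)" "\<gamma> \<in> Gamma1 a b Ord"
      "(B, A, E, C) = mmul a b r \<gamma>"
      using GU2_n_orbit_meets_Rset[OF n GU2_n_mmul_Gamma1[OF gu J, unfolded gJ] entries(2,1,4,3)]
      by blast
    have "g = mmul a b (B, A, E, C) J" unfolding g_eq J_def by simp
    then have "g = mmul a b r (mmul a b \<gamma> J)" unfolding r(3) mmul_assoc .
    then show ?thesis using False Gamma1_mmul[OF r(2) J] r(1) by (intro exI[of _ "n - k"]) auto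
  qed
qed

lemma coset_reps_odd:
  assumes "odd n"
  shows "coset_reps a b Ord n (\<Union>k\<in>{n div 2 + 1..n}. Rset a b Ord n xs k)"
proof (rule coset_repsI)
  have "n > 0" using assms by (rule odd_pos)
  then show "(\<Union>k\<in>{n div 2 + 1..n}. Rset a b Ord n xs k) \<subseteq> GU2_n a b n \<inter> M2O_units a b Ord"
    by (intro UN_least Rset_subset) simp_all
  fix g assume "g \<in> GU2_n a b n \<inter> M2O_units a b Ord"
  then obtain k where "n \<le> 2 * k" "k \<le> n"
    "\<exists>r\<in>Rset a b Ord n xs k. \<exists>\<gamma>\<in>Gamma1 a b Ord. g = mmul a b r \<gamma>"
    using GU2_n_M2O_units_orbit_meets_Rset \<open>n > 0\<close> by blast
  moreover have "k \<in> {n div 2 + 1..n}" using calculation(1,2) assms by (auto elim!: oddE)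
  ultimately show "\<exists>r\<in>\<Union>k\<in>{n div 2 + 1..n}. Rset a b Ord n xs k. \<exists>\<gamma>\<in>Gamma1 a b Ord. g = mmul a b r \<gamma>"
    by blast
next
  fix r1 r2 \<delta>
  assume "r1 \<in> (\<Union>k\<in>{n div 2 + 1..n}. Rset a b Ord n xs k)"
    and "r2 \<in> (\<Union>k\<in>{n div 2 + 1..n}. Rset a b Ord n xs k)"
    and \<delta>: "\<delta> \<in> Gamma1 a b Ord" "r2 = mmul a b r1 \<delta>"
  then obtain k1 k2 where k: "k1 \<in> {n div 2 + 1..n}" "k2 \<in> {n div 2 + 1..n}"
    and r: "r1 \<in> Rset a b Ord n xs k1" "r2 \<in> Rset a b Ord n xs k2" by blast
  have "k1 \<ge> 1" using k(1) by simp
  then have "r1 = r2 \<or> k2 = n - k1" using Rset_Gamma1_related[OF r _ \<delta>] by blast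
  moreover have "k2 \<noteq> n - k1" using k assms by (auto elim!: oddE)
  ultimately show "r1 = r2" by blast
qed

lemma Rset_antidiag_partner:
  assumes n: "n = 2 * m" "m > 0"
    and r: "(x, v, w, y) \<in> Rset a b Ord n xs m" and r': "r' \<in> Rset a b Ord n xs m"
    and \<gamma>: "\<gamma> \<in> Gamma1_antidiag a b Ord" "r' = mmul a b (x, v, w, y) \<gamma>"
  shows "\<exists>s\<in>xs m. \<exists>t\<in>xs m. (\<exists>u\<in>qunits a b Ord. v = qmul a b s u) \<and>
    (\<exists>u\<in>qunits a b Ord. w = qmul a b t u) \<and>
    r' = (s, qsc (1 / of_nat m) (qmul a b (qmul a b x (qconj w)) t),
             qsc (1 / of_nat m) (qmul a b (qmul a b y (qconj v)) s), t)"
proof -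
  obtain \<alpha> \<beta> where \<alpha>: "\<alpha> \<in> qunits a b Ord" and \<beta>: "\<beta> \<in> qunits a b Ord"
    and r'_eq: "r' = (qmul a b v \<beta>, qmul a b x \<alpha>, qmul a b y \<beta>, qmul a b w \<alpha>)"
    using \<gamma> unfolding Gamma1_antidiag_def by auto
  obtain \<alpha>' \<beta>' where "\<alpha>' \<in> qunits a b Ord" "qmul a b \<alpha> \<alpha>' = qone"
    "\<beta>' \<in> qunits a b Ord" "qmul a b \<beta> \<beta>' = qone"
    using qunits_inverse \<alpha> \<beta> by blast
  then have "\<exists>u\<in>qunits a b Ord. v = qmul a b (qmul a b v \<beta>) u"
    "\<exists>u\<in>qunits a b Ord. w = qmul a b (qmul a b w \<alpha>) u"
    by (metis qmul_cancel_right_inverse)+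
  moreover have "qnorm a b v = of_nat m" "qnorm a b w = of_nat m"
    using Rset_qnorms[OF r] n by simp_all
  then have "r' = (qmul a b v \<beta>,
      qsc (1 / of_nat m) (qmul a b (qmul a b x (qconj w)) (qmul a b w \<alpha>)),
      qsc (1 / of_nat m) (qmul a b (qmul a b y (qconj v)) (qmul a b v \<beta>)), qmul a b w \<alpha>)"
    using n(2) by (simp add: r'_eq qmul_qconj_cancel qsc_qsc)
  moreover have "qmul a b v \<beta> \<in> xs m" "qmul a b w \<alpha> \<in> xs m"
    using r' unfolding r'_eq Rset_iff by blast+
  ultimately show ?thesis by blast
qed

lemma coset_reps_even:
  assumes n: "n = 2 * m" "m > 0"
    and R': "R' \<subseteq> Rset a b Ord n xs m"
      "\<forall>r\<in>Rset a b Ord n xs m. \<exists>!r'\<in>R'. \<exists>\<gamma>\<in>Gamma1 a b Ord. r = mmul a b r' \<gamma>"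
  shows "coset_reps a b Ord n ((\<Union>k\<in>{m + 1..n}. Rset a b Ord n xs k) \<union> R')"
proof (rule coset_repsI)
  let ?U = "\<Union>k\<in>{m + 1..n}. Rset a b Ord n xs k"
  have "n > 0" using n by simp
  have "?U \<subseteq> GU2_n a b n \<inter> M2O_units a b Ord"
    by (intro UN_least Rset_subset[OF \<open>n > 0\<close>]) simp
  moreover have "R' \<subseteq> GU2_n a b n \<inter> M2O_units a b Ord"
    using R'(1) Rset_subset[OF \<open>n > 0\<close>, of m] n(1) by (simp add: subset_trans)
  ultimately show "?U \<union> R' \<subseteq> GU2_n a b n \<inter> M2O_units a b Ord" by blast
  fix g assume "g \<in> GU2_n a b n \<inter> M2O_units a b Ord"
  then obtain k where k: "n \<le> 2 * k" "k \<le> n"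
    and "\<exists>r\<in>Rset a b Ord n xs k. \<exists>\<gamma>\<in>Gamma1 a b Ord. g = mmul a b r \<gamma>"
    using GU2_n_M2O_units_orbit_meets_Rset[OF \<open>n > 0\<close>] by blast
  then obtain r \<gamma> where r: "r \<in> Rset a b Ord n xs k"
    and \<gamma>: "\<gamma> \<in> Gamma1 a b Ord" "g = mmul a b r \<gamma>" by blast
  show "\<exists>r\<in>?U \<union> R'. \<exists>\<gamma>\<in>Gamma1 a b Ord. g = mmul a b r \<gamma>"
  proof (cases "k = m")
    case True
    then obtain r' \<gamma>' where r': "r' \<in> R'" "\<gamma>' \<in> Gamma1 a b Ord" "r = mmul a b r' \<gamma>'"
      using R'(2) r by blast
    then have "g = mmul a b r' (mmul a b \<gamma>' \<gamma>)" using \<gamma>(2) by (simp add: mmul_assoc)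
    then show ?thesis using r' Gamma1_mmul[OF r'(2) \<gamma>(1)] by blast
  next
    case False
    then have "k \<in> {m + 1..n}" using k n(1) by simp
    then show ?thesis using r \<gamma> by blast
  qed
next
  fix r1 r2 \<delta>
  assume r: "r1 \<in> (\<Union>k\<in>{m + 1..n}. Rset a b Ord n xs k) \<union> R'"
    "r2 \<in> (\<Union>k\<in>{m + 1..n}. Rset a b Ord n xs k) \<union> R'"
    and \<delta>: "\<delta> \<in> Gamma1 a b Ord" "r2 = mmul a b r1 \<delta>"
  have "\<exists>k. r \<in> Rset a b Ord n xs k \<and> m \<le> k \<and> k \<le> n \<and> (k = m \<longrightarrow> r \<in> R')"
    if "r \<in> (\<Union>k\<in>{m + 1..n}. Rset a b Ord n xs k) \<union> R'" for r
    using that R'(1) n(1) by auto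
  then obtain k1 k2 where r: "r1 \<in> Rset a b Ord n xs k1" "r2 \<in> Rset a b Ord n xs k2"
    and k: "m \<le> k1" "m \<le> k2" "k1 \<le> n" and R'_if: "k1 = m \<longrightarrow> r1 \<in> R'" "k2 = m \<longrightarrow> r2 \<in> R'"
    using r by meson
  have "k1 \<ge> 1" using k(1) n(2) by simp
  then have "r1 = r2 \<or> k2 = n - k1" using Rset_Gamma1_related[OF r _ \<delta>] by blast
  then show "r1 = r2"
  proof
    assume "k2 = n - k1"
    then have "k1 = m" "k2 = m" using k n(1) by auto
    then have "r1 \<in> R'" "r2 \<in> R'" "r2 \<in> Rset a b Ord n xs m" using R'_if r(2) by auto
    moreover have "\<exists>\<gamma>\<in>Gamma1 a b Ord. r2 = mmul a b r2 \<gamma>" using mone_in_Gamma1 by force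
    ultimately show "r1 = r2" using R'(2) \<delta> by blast
  qed
qed

end

theorem corollary5p14:
  fixes a b p :: int and Ord :: "quat set" and n :: nat and xs :: "nat \<Rightarrow> quat set"
  assumes "prime p"
    and "ramified_exactly_at_p_inf p a b"
    and "maximal_order a b Ord"
    and "n \<ge> 1"
    and "\<forall>k. unit_rep_system a b Ord k (xs k)"
  shows "(odd n \<longrightarrow>
            coset_reps a b Ord n (\<Union>k\<in>{n div 2 + 1..n}. Rset a b Ord n xs k))
       \<and> (even n \<longrightarrow>
            (\<forall>x v w y r'. (x, v, w, y) \<in> Rset a b Ord n xs (n div 2) \<longrightarrow>
                r' \<in> Rset a b Ord n xs (n div 2) \<longrightarrow> r' \<noteq> (x, v, w, y) \<longrightarrow>
                (\<exists>\<gamma>\<in>Gamma1_antidiag a b Ord. r' = mmul a b (x, v, w, y) \<gamma>) \<longrightarrow>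
                (\<exists>s\<in>xs (n div 2). \<exists>t\<in>xs (n div 2).
                   (\<exists>u\<in>qunits a b Ord. v = qmul a b s u) \<and>
                   (\<exists>u\<in>qunits a b Ord. w = qmul a b t u) \<and>
                   r' = (s,
                         qsc (1 / of_nat (n div 2)) (qmul a b (qmul a b x (qconj w)) t),
                         qsc (1 / of_nat (n div 2)) (qmul a b (qmul a b y (qconj v)) s),
                         t)))
          \<and> (\<forall>R'. R' \<subseteq> Rset a b Ord n xs (n div 2) \<and>
                 (\<forall>r\<in>Rset a b Ord n xs (n div 2). \<exists>!r'\<in>R'. \<exists>\<gamma>\<in>Gamma1 a b Ord. r = mmul a b r' \<gamma>)
               \<longrightarrow> coset_reps a b Ord n
                     ((\<Union>k\<in>{n div 2 + 1..n}. Rset a b Ord n xs k) \<union> R')))"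
proof -
  interpret unit_rep_systems a b Ord xs
    using assms(2,3,5)
    by unfold_locales (auto simp: ramified_exactly_at_p_inf_def maximal_order_def)
  have even_n: "n = 2 * (n div 2)" "n div 2 > 0" if "even n"
    using that assms(4) by auto
  show ?thesis
    using coset_reps_odd Rset_antidiag_partner[OF even_n] coset_reps_even[OF even_n]
    by blast
qed

end
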